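(* Let $r,s$ be real numbers with $s > 3\sqrt{3}\, r > 0$, and let $C_{r,s} \subset \mathbb{P}^2$ be the projective closure of the curve $s(xy - r^2) = x^2 y + x y^2$, i.e. $s(xyz - r^2 z^3) = x^2 y + x y^2$ in coordinates $[x,y,z]$; this is a nonsingular cubic. Equip its set of real points with the group law in which the identity is $[1,-1,0]$ and, for points $P,Q$, the sum $P+Q$ is the reflection in the line $y=x$ (i.e. $[x,y,z]\mapsto[y,x,z]$) of the third intersection point of $C_{r,s}$ with the line through $P$ and $Q$ (the tangent line if $P=Q$). Call a real point of $C_{r,s}$ a triangle point if it is an affine point $(x,y)$ with $x>0$ and $y>0$. Then the sum of two triangle points is not a triangle point, and the sum of a triangle point with a real point that is not a triangle point is a triangle point. Consequently, the sum of an odd number of triangle points is a triangle point, and the sum of an even number of triangle points is not a triangle point.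
   Context: The chord–tangent construction described (third intersection point followed by reflection in $y=x$, identity $[1,-1,0]$) defines the abelian group structure on the real points of $C_{r,s}$ used here. *)

theory Defs
  imports Complex_Main
begin

text \<open>Points of the real projective plane are represented by nonzero real triples
  (x,y,z) (homogeneous coordinates); all notions below are invariant under
  scaling by a nonzero real.\<close>

type_synonym pt = "real \<times> real \<times> real"

definition pscale :: "real \<Rightarrow> pt \<Rightarrow> pt" where
  "pscale c p = (case p of (x,y,z) \<Rightarrow> (c*x, c*y, c*z))"

definition padd :: "pt \<Rightarrow> pt \<Rightarrow> pt" where
  "padd p q = (case p of (x1,y1,z1) \<Rightarrow> case q of (x2,y2,z2) \<Rightarrow> (x1+x2, y1+y2, z1+z2))"

definition cross :: "pt \<Rightarrow> pt \<Rightarrow> pt" where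
  "cross p q = (case p of (x1,y1,z1) \<Rightarrow> case q of (x2,y2,z2) \<Rightarrow>
      (y1*z2 - z1*y2, z1*x2 - x1*z2, x1*y2 - y1*x2))"

definition cubicF :: "real \<Rightarrow> real \<Rightarrow> pt \<Rightarrow> real" where
  "cubicF r s p = (case p of (x,y,z) \<Rightarrow> s*(x*y*z - r^2*z^3) - (x^2*y + x*y^2))"

definition on_curve :: "real \<Rightarrow> real \<Rightarrow> pt \<Rightarrow> bool" where
  "on_curve r s p \<longleftrightarrow> p \<noteq> (0,0,0) \<and> cubicF r s p = 0"

text \<open>R is the third intersection point of C with the line through P and Q
  (the tangent line at P if P = Q): there is a line, spanned by independent
  vectors u, v, containing P, Q, R, such that the restriction of the cubic to the
  line, as a binary cubic form in the line coordinates (a,b), is a nonzero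
  multiple of the product of the linear forms vanishing at P, Q, R.  Thus the
  intersection divisor of the line with C is P + Q + R (with multiplicities).\<close>
definition third_point :: "real \<Rightarrow> real \<Rightarrow> pt \<Rightarrow> pt \<Rightarrow> pt \<Rightarrow> bool" where
  "third_point r s P Q R \<longleftrightarrow>
     (\<exists>u v lam a1 b1 a2 b2 a3 b3.
        cross u v \<noteq> (0,0,0) \<and> lam \<noteq> 0 \<and>
        (a1,b1) \<noteq> (0,0) \<and> (a2,b2) \<noteq> (0,0) \<and> (a3,b3) \<noteq> (0,0) \<and>
        P = padd (pscale a1 u) (pscale b1 v) \<and>
        Q = padd (pscale a2 u) (pscale b2 v) \<and>
        R = padd (pscale a3 u) (pscale b3 v) \<and>
        (\<forall>a b. cubicF r s (padd (pscale a u) (pscale b v)) =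
                lam * (b1*a - a1*b) * (b2*a - a2*b) * (b3*a - a3*b)))"

definition swap_xy :: "pt \<Rightarrow> pt" where
  "swap_xy p = (case p of (x,y,z) \<Rightarrow> (y,x,z))"

definition cadd :: "real \<Rightarrow> real \<Rightarrow> pt \<Rightarrow> pt \<Rightarrow> pt" where
  "cadd r s P Q = swap_xy (SOME R. third_point r s P Q R)"

definition czero :: pt where
  "czero = (1, -1, 0)"

definition csum :: "real \<Rightarrow> real \<Rightarrow> pt list \<Rightarrow> pt" where
  "csum r s Ps = foldr (cadd r s) Ps czero"

definition triangle_pt :: "real \<Rightarrow> real \<Rightarrow> pt \<Rightarrow> bool" where
  "triangle_pt r s p \<longleftrightarrow> on_curve r s p \<and>
     (case p of (x,y,z) \<Rightarrow> z \<noteq> 0 \<and> x/z > 0 \<and> y/z > 0)"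

end

theory Submission
  imports Defs
begin

text \<open>On the real points of the curve the quadratic form q = (x+y)(x+y-sz) is negative exactly at
  the triangle points and vanishes only at O = [1,-1,0].  If P, Q, R are the three intersections of a
  line with the curve, evaluating the cubic restricted to that line at its intersections with
  x + y = 0 and with x + y = sz shows q(P) q(Q) q(R) \<ge> 0.  This sign rule gives both statements
  about third points, except when O is among them; but a line through O and a triangle point has all
  its other affine points in the strip 0 < (x+y)/z < s, and it is not the tangent at O.
  Since the sum is defined by a choice, one must also show that third points exist; for tangents
  this uses that the curve is nonsingular at triangle points, which is where s > 3\<surd>3 r enters.\<close>

definition pdot :: "pt \<Rightarrow> pt \<Rightarrow> real" where
  "pdot p q = (case p of (x1,y1,z1) \<Rightarrow> case q of (x2,y2,z2) \<Rightarrow> x1*x2 + y1*y2 + z1*z2)"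

definition cubic_grad :: "real \<Rightarrow> real \<Rightarrow> pt \<Rightarrow> pt" where
  "cubic_grad r s p = (case p of (x,y,z) \<Rightarrow>
     (s*y*z - 2*x*y - y^2, s*x*z - x^2 - 2*x*y, s*x*y - 3*s*r^2*z^2))"

definition polar :: "real \<Rightarrow> real \<Rightarrow> pt \<Rightarrow> pt \<Rightarrow> real" where
  "polar r s p q = pdot (cubic_grad r s p) q"

text \<open>The zero set of strip_form consists of the line x + y = 0 through the origin and O = [1,-1,0],
  and the asymptote x + y = s z, which is the tangent to the curve at O.\<close>
definition strip_form :: "real \<Rightarrow> pt \<Rightarrow> real" where
  "strip_form s p = (case p of (x,y,z) \<Rightarrow> (x+y)*(x+y-s*z))"

lemma cubicF_padd_pscale:
  "cubicF r s (padd (pscale a p) (pscale b q)) =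
     a^3 * cubicF r s p + a^2*b * polar r s p q + a*b^2 * polar r s q p + b^3 * cubicF r s q"
  unfolding cubicF_def polar_def cubic_grad_def pdot_def padd_def pscale_def
  by (cases p, cases q) (simp add: power2_eq_square power3_eq_cube algebra_simps)

lemma polar_padd_pscale:
  "polar r s (padd (pscale a p) (pscale b q)) p =
     3*a^2 * cubicF r s p + 2*a*b * polar r s p q + b^2 * polar r s q p"
  unfolding cubicF_def polar_def cubic_grad_def pdot_def padd_def pscale_def
  by (cases p, cases q) (simp add: power2_eq_square power3_eq_cube algebra_simps)

lemma polar_self: "polar r s p p = 3 * cubicF r s p"
  unfolding cubicF_def polar_def cubic_grad_def pdot_def
  by (cases p) (simp add: power2_eq_square power3_eq_cube algebra_simps)

lemma cubicF_add_diff: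
  "cubicF r s (q1+p1, q2+p2, q3+p3) - cubicF r s (q1-p1, q2-p2, q3-p3)
     = 2 * cubicF r s (p1,p2,p3) + 2 * polar r s (q1,q2,q3) (p1,p2,p3)"
  unfolding cubicF_def polar_def cubic_grad_def pdot_def
  by (simp add: power2_eq_square power3_eq_cube algebra_simps)

lemma cubicF_antidiagonal: "cubicF r s (x, -x, z) = -s*z*(x^2 + r^2*z^2)"
  unfolding cubicF_def by (simp add: power2_eq_square power3_eq_cube algebra_simps)

lemma cubicF_on_asymptote:
  assumes "x + y = s*z"
  shows "cubicF r s (x,y,z) = -s*r^2*z^3"
proof -
  have "cubicF r s (x,y,z) = x*y*(s*z - (x+y)) - s*r^2*z^3"
    unfolding cubicF_def by (simp add: power2_eq_square power3_eq_cube algebra_simps)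
  with assms show ?thesis by simp
qed

lemma polar_antidiagonal: "polar r s (w,-w,0) (x,y,z) = w^2*(x+y-s*z)"
  unfolding polar_def cubic_grad_def pdot_def by (simp add: power2_eq_square algebra_simps)

lemma cubicF_swap_xy: "cubicF r s (swap_xy p) = cubicF r s p"
  unfolding cubicF_def swap_xy_def by (cases p) (simp add: power2_eq_square algebra_simps)

lemma cubicF_affine: "cubicF r s (a*z, b*z, z) = z^3 * (s*(a*b - r^2) - a*b*(a+b))"
  unfolding cubicF_def by (simp add: power2_eq_square power3_eq_cube algebra_simps)

lemma strip_form_affine: "strip_form s (a*z, b*z, z) = z^2 * ((a+b)*(a+b-s))"
  unfolding strip_form_def by (simp add: power2_eq_square algebra_simps)

lemma cross_nonzero_independent:
  assumes "cross u v \<noteq> (0,0,0)" and "padd (pscale a u) (pscale b v) = (0,0,0)"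
  shows "a = 0 \<and> b = 0"
proof -
  have "pscale b (cross u v) = cross u (padd (pscale a u) (pscale b v))"
    and "pscale a (cross u v) = cross (padd (pscale a u) (pscale b v)) v"
    by (cases u, cases v, simp add: cross_def padd_def pscale_def algebra_simps)+
  then have "pscale a (cross u v) = (0,0,0)" "pscale b (cross u v) = (0,0,0)"
    using assms(2) by (simp_all add: cross_def)
  then show ?thesis
    using assms(1) by (cases "cross u v") (auto simp: pscale_def)
qed

lemma pos_pos_iff_sum_strip:
  fixes a b s :: real
  assumes "s > 0" and "a*b*(s - a - b) > 0"
  shows "(a+b)*(a+b-s) < 0 \<longleftrightarrow> a > 0 \<and> b > 0"
proof
  assume "(a+b)*(a+b-s) < 0"
  with \<open>s > 0\<close> have "a + b > 0" "s - a - b > 0"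
    by (auto simp: mult_less_0_iff)
  moreover from this assms(2) have "a*b > 0"
    by (metis zero_less_mult_pos2)
  ultimately show "a > 0 \<and> b > 0"
    by (auto simp: zero_less_mult_iff)
next
  assume "a > 0 \<and> b > 0"
  with assms(2) have "s - a - b > 0"
    by (metis mult_pos_pos zero_less_mult_pos)
  with \<open>a > 0 \<and> b > 0\<close> show "(a+b)*(a+b-s) < 0"
    by (simp add: mult_pos_neg)
qed

lemma triangle_pt_iff_strip_form_neg:
  assumes "r > 0" and "s > 0"
  shows "triangle_pt r s P \<longleftrightarrow> on_curve r s P \<and> strip_form s P < 0"
proof -
  obtain x y z where P: "P = (x,y,z)" by (cases P)
  show ?thesis
  proof (cases "z = 0")
    case True
    then show ?thesis by (simp add: P triangle_pt_def strip_form_def)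
  next
    case False
    define a b where "a = x/z" and "b = y/z"
    with False have P': "P = (a*z, b*z, z)" by (simp add: P)
    have "on_curve r s P \<longleftrightarrow> s*(a*b - r^2) - a*b*(a+b) = 0"
      using False by (simp add: P' on_curve_def cubicF_affine)
    also have "\<dots> \<longleftrightarrow> a*b*(s - a - b) = s*r^2"
      by (auto simp: algebra_simps)
    finally have "on_curve r s P \<longleftrightarrow> a*b*(s - a - b) = s*r^2" .
    moreover have "s*r^2 > 0" using assms by simp
    moreover have "z^2 > 0" using False by simp
    ultimately show ?thesis
      using False pos_pos_iff_sum_strip[OF \<open>s > 0\<close>, of a b]
      by (auto simp: P' triangle_pt_def strip_form_affine mult_less_0_iff)
  qed
qed

lemma strip_form_zero_on_curve:
  assumes "r > 0" and "s > 0" and "on_curve r s P" and "strip_form s P = 0"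
  obtains w where "w \<noteq> 0" and "P = (w, -w, 0)"
proof -
  obtain x y z where P: "P = (x,y,z)" by (cases P)
  have "z = 0"
  proof (rule ccontr)
    assume "z \<noteq> 0"
    define a b where "a = x/z" and "b = y/z"
    with \<open>z \<noteq> 0\<close> have P': "P = (a*z, b*z, z)" by (simp add: P)
    from assms(3) \<open>z \<noteq> 0\<close> have curve: "s*(a*b - r^2) = a*b*(a+b)"
      by (simp add: P' on_curve_def cubicF_affine)
    from assms(4) \<open>z \<noteq> 0\<close> have "b = -a \<or> a + b = s"
      by (auto simp: P' strip_form_affine)
    then show False
    proof
      assume "b = -a"
      with curve have "s*(a^2 + r^2) = 0" by (simp add: power2_eq_square algebra_simps)
      with assms(1,2) show False by (simp add: add_nonneg_pos)
    next
      assume "a + b = s"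
      with curve have "s*r^2 = 0" by (simp add: algebra_simps)
      with assms(1,2) show False by simp
    qed
  qed
  with assms(3,4) have "y = -x" "x \<noteq> 0"
    by (auto simp: P on_curve_def strip_form_def)
  with that show thesis by (simp add: P \<open>z = 0\<close>)
qed

lemma third_pointE:
  assumes "third_point r s P Q R"
  obtains u1 u2 u3 v1 v2 v3 lam a1 b1 a2 b2 a3 b3 where
    "cross (u1,u2,u3) (v1,v2,v3) \<noteq> (0,0,0)" "lam \<noteq> 0"
    "(a1,b1) \<noteq> (0,0)" "(a2,b2) \<noteq> (0,0)" "(a3,b3) \<noteq> (0,0)"
    "P = (a1*u1+b1*v1, a1*u2+b1*v2, a1*u3+b1*v3)"
    "Q = (a2*u1+b2*v1, a2*u2+b2*v2, a2*u3+b2*v3)"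
    "R = (a3*u1+b3*v1, a3*u2+b3*v2, a3*u3+b3*v3)"
    "\<And>a b. cubicF r s (a*u1+b*v1, a*u2+b*v2, a*u3+b*v3) =
            lam * (b1*a - a1*b) * (b2*a - a2*b) * (b3*a - a3*b)"
proof -
  from assms obtain u v lam a1 b1 a2 b2 a3 b3 where
    "cross u v \<noteq> (0,0,0)" "lam \<noteq> 0"
    "(a1,b1) \<noteq> (0,0)" "(a2,b2) \<noteq> (0,0)" "(a3,b3) \<noteq> (0,0)"
    "P = padd (pscale a1 u) (pscale b1 v)"
    "Q = padd (pscale a2 u) (pscale b2 v)"
    "R = padd (pscale a3 u) (pscale b3 v)"
    "\<And>a b. cubicF r s (padd (pscale a u) (pscale b v)) =
            lam * (b1*a - a1*b) * (b2*a - a2*b) * (b3*a - a3*b)"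
    unfolding third_point_def by blast
  moreover obtain u1 u2 u3 v1 v2 v3 where "u = (u1,u2,u3)" "v = (v1,v2,v3)"
    by (cases u, cases v)
  ultimately show thesis
    by (intro that[of u1 u2 u3 v1 v2 v3 lam a1 b1 a2 b2 a3 b3]) (simp_all add: padd_def pscale_def)
qed

lemma third_pointI:
  assumes "cross u v \<noteq> (0,0,0)" and "lam \<noteq> 0"
    and "(aP,bP) \<noteq> (0,0)" and "(aQ,bQ) \<noteq> (0,0)" and "(aR,bR) \<noteq> (0,0)"
    and "padd (pscale aP u) (pscale bP v) = P"
    and "padd (pscale aQ u) (pscale bQ v) = Q"
    and "padd (pscale aR u) (pscale bR v) = R"
    and "\<And>a b. cubicF r s (padd (pscale a u) (pscale b v)) =
                lam * (bP*a - aP*b) * (bQ*a - aQ*b) * (bR*a - aR*b)"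
  shows "third_point r s P Q R"
  unfolding third_point_def using assms by metis

lemma third_point_swap:
  assumes "third_point r s P Q R"
  shows "third_point r s P R Q"
proof -
  from assms obtain u v lam a1 b1 a2 b2 a3 b3 where
    "cross u v \<noteq> (0,0,0) \<and> lam \<noteq> 0 \<and>
     (a1,b1) \<noteq> (0,0) \<and> (a3,b3) \<noteq> (0,0) \<and> (a2,b2) \<noteq> (0,0) \<and>
     P = padd (pscale a1 u) (pscale b1 v) \<and>
     R = padd (pscale a3 u) (pscale b3 v) \<and>
     Q = padd (pscale a2 u) (pscale b2 v)"
    and "\<forall>a b. cubicF r s (padd (pscale a u) (pscale b v)) =
            lam * (b1*a - a1*b) * (b2*a - a2*b) * (b3*a - a3*b)"
    unfolding third_point_def by blast
  moreover have "lam * (b1*a - a1*b) * (b2*a - a2*b) * (b3*a - a3*b) =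
                 lam * (b1*a - a1*b) * (b3*a - a3*b) * (b2*a - a2*b)" for a b :: real
    by (simp add: mult_ac)
  ultimately show ?thesis
    unfolding third_point_def by metis
qed

lemma third_point_on_curve:
  assumes "third_point r s P Q R"
  shows "on_curve r s R"
proof -
  from assms obtain u v lam a1 b1 a2 b2 a3 b3 where
    "cross u v \<noteq> (0,0,0)" "(a3,b3) \<noteq> (0,0)" "R = padd (pscale a3 u) (pscale b3 v)"
    "\<And>a b. cubicF r s (padd (pscale a u) (pscale b v)) =
            lam * (b1*a - a1*b) * (b2*a - a2*b) * (b3*a - a3*b)"
    unfolding third_point_def by blast
  then show ?thesis
    using cross_nonzero_independent by (fastforce simp: on_curve_def)
qed

lemma third_point_collinear: "third_point r s P Q R \<Longrightarrow> pdot P (cross Q R) = 0"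
  by (erule third_pointE) (simp add: pdot_def cross_def algebra_simps)

lemma third_point_strip_form:
  assumes "third_point r s P Q R"
  shows "strip_form s P * strip_form s Q * strip_form s R \<ge> 0"
proof -
  obtain u1 u2 u3 v1 v2 v3 lam a1 b1 a2 b2 a3 b3 where "lam \<noteq> 0" and
    P: "P = (a1*u1+b1*v1, a1*u2+b1*v2, a1*u3+b1*v3)" and
    Q: "Q = (a2*u1+b2*v1, a2*u2+b2*v2, a2*u3+b2*v3)" and
    R: "R = (a3*u1+b3*v1, a3*u2+b3*v2, a3*u3+b3*v3)" and
    restr: "\<And>a b. cubicF r s (a*u1+b*v1, a*u2+b*v2, a*u3+b*v3) =
                lam * (b1*a - a1*b) * (b2*a - a2*b) * (b3*a - a3*b)"
    using third_pointE[OF assms] by metis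
  \<comment> \<open>The linear forms x + y and x + y - s z take the values mu, tu at u and mv, tv at v,
    so they vanish on the line at the parameters (mv, -mu) and (tv, -tu).  Both points have the
    same z-coordinate W, and there the cubic is -s W (X^2 + r^2 W^2) resp. -s r^2 W^3.\<close>
  define mu mv where "mu = u1 + u2" and "mv = v1 + v2"
  define tu tv where "tu = mu - s*u3" and "tv = mv - s*v3"
  define X W where "X = mv*u1 - mu*v1" and "W = mv*u3 - mu*v3"
  have "cubicF r s (X, -X, W) = lam * (b1*mv + a1*mu) * (b2*mv + a2*mu) * (b3*mv + a3*mu)"
    using restr[of mv "-mu"] by (simp add: X_def W_def mu_def mv_def algebra_simps)
  then have on_L1: "lam * (b1*mv + a1*mu) * (b2*mv + a2*mu) * (b3*mv + a3*mu) = -s*W*(X^2 + r^2*W^2)"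
    by (simp add: cubicF_antidiagonal)
  have "cubicF r s (tv*u1 - tu*v1, tv*u2 - tu*v2, W) = -s*r^2*W^3"
    by (rule cubicF_on_asymptote) (simp add: tu_def tv_def mu_def mv_def W_def algebra_simps)
  moreover have "tv*u3 - tu*v3 = W" by (simp add: tu_def tv_def W_def algebra_simps)
  ultimately have on_L2: "lam * (b1*tv + a1*tu) * (b2*tv + a2*tu) * (b3*tv + a3*tu) = -s*r^2*W^3"
    using restr[of tv "-tu"] by (simp add: algebra_simps)
  have "strip_form s P = (b1*mv + a1*mu) * (b1*tv + a1*tu)"
    and "strip_form s Q = (b2*mv + a2*mu) * (b2*tv + a2*tu)"
    and "strip_form s R = (b3*mv + a3*mu) * (b3*tv + a3*tu)"
    by (simp_all add: P Q R strip_form_def mu_def mv_def tu_def tv_def algebra_simps)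
  then have "(lam*lam) * (strip_form s P * strip_form s Q * strip_form s R) =
        (lam * (b1*mv + a1*mu) * (b2*mv + a2*mu) * (b3*mv + a3*mu)) *
        (lam * (b1*tv + a1*tu) * (b2*tv + a2*tu) * (b3*tv + a3*tu))"
    by (simp only: mult_ac)
  also have "\<dots> = (-s*W*(X^2 + r^2*W^2)) * (-s*r^2*W^3)"
    by (simp only: on_L1 on_L2)
  also have "\<dots> = s^2*r^2*W^4*(X^2 + r^2*W^2)"
    by (simp add: eval_nat_numeral algebra_simps)
  finally have "(lam*lam) * (strip_form s P * strip_form s Q * strip_form s R) \<ge> 0"
    by simp
  moreover have "lam*lam > 0" using \<open>lam \<noteq> 0\<close> by (metis not_real_square_gt_zero)
  ultimately show ?thesis by (simp add: zero_le_mult_iff)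
qed

lemma third_point_double_tangent:
  assumes "third_point r s P Q R" and "R = pscale k Q"
  shows "polar r s Q P = 0"
proof -
  obtain u1 u2 u3 v1 v2 v3 lam a1 b1 a2 b2 a3 b3 where
    indep: "cross (u1,u2,u3) (v1,v2,v3) \<noteq> (0,0,0)" and
    P: "P = (a1*u1+b1*v1, a1*u2+b1*v2, a1*u3+b1*v3)" and
    Q: "Q = (a2*u1+b2*v1, a2*u2+b2*v2, a2*u3+b2*v3)" and
    R: "R = (a3*u1+b3*v1, a3*u2+b3*v2, a3*u3+b3*v3)" and
    restr: "\<And>a b. cubicF r s (a*u1+b*v1, a*u2+b*v2, a*u3+b*v3) =
                lam * (b1*a - a1*b) * (b2*a - a2*b) * (b3*a - a3*b)"
    using third_pointE[OF assms(1)] by metis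
  have "padd (pscale (a3 - k*a2) (u1,u2,u3)) (pscale (b3 - k*b2) (v1,v2,v3)) = (0,0,0)"
    using assms(2) by (simp add: P Q R padd_def pscale_def algebra_simps)
  then have "a3 - k*a2 = 0 \<and> b3 - k*b2 = 0"
    by (rule cross_nonzero_independent[OF indep])
  then have a3: "a3 = k*a2" and b3: "b3 = k*b2"
    by simp_all
  obtain p1 p2 p3 q1 q2 q3 where P': "P = (p1,p2,p3)" and Q': "Q = (q1,q2,q3)"
    by (cases P, cases Q)
  \<comment> \<open>The restricted cubic has a double root at Q, so it takes the same value at Q + P and Q - P.\<close>
  have "cubicF r s (q1+p1, q2+p2, q3+p3) = cubicF r s (q1-p1, q2-p2, q3-p3)"
    using restr[of "a2+a1" "b2+b1"] restr[of "a2-a1" "b2-b1"] P P' Q Q'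
    by (simp add: a3 b3 algebra_simps)
  moreover have "cubicF r s P = 0"
    using restr[of a1 b1] by (simp add: P algebra_simps)
  ultimately have "polar r s (q1,q2,q3) (p1,p2,p3) = 0"
    using cubicF_add_diff[of r s q1 p1 q2 p2 q3 p3] by (simp add: P')
  then show ?thesis by (simp add: P' Q')
qed

lemma triangle_pt_coords_nonzero:
  assumes "r > 0" and "s > 0" and "triangle_pt r s (x,y,z)"
  shows "x \<noteq> 0" and "y \<noteq> 0" and "z \<noteq> 0" and "x + y - s*z \<noteq> 0"
proof -
  show "x \<noteq> 0" "y \<noteq> 0" "z \<noteq> 0"
    using assms(3) by (auto simp: triangle_pt_def)
  have "(x+y)*(x+y-s*z) < 0"
    using assms triangle_pt_iff_strip_form_neg by (simp add: strip_form_def)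
  then show "x + y - s*z \<noteq> 0" by auto
qed

lemma triangle_pt_off_tangents_at_infinity:
  assumes "r > 0" and "s > 0" and "triangle_pt r s (p1,p2,p3)"
    and "(d1,d2) \<noteq> (0,0)" and "cubicF r s (d1,d2,0) = 0"
  shows "polar r s (d1,d2,0) (p1,p2,p3) \<noteq> 0"
proof
  assume polar: "polar r s (d1,d2,0) (p1,p2,p3) = 0"
  note P = triangle_pt_coords_nonzero[OF assms(1-3)]
  have "d1*d2*(d1+d2) = 0"
    using assms(5) by (simp add: cubicF_def power2_eq_square algebra_simps)
  then consider "d2 = 0" | "d1 = 0" | "d2 = -d1" by force
  then show False
  proof cases
    case 1
    with polar have "d1^2*p2 = 0" by (simp add: polar_def cubic_grad_def pdot_def)
    with 1 assms(4) P show False by simp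
  next
    case 2
    with polar have "d2^2*p1 = 0" by (simp add: polar_def cubic_grad_def pdot_def)
    with 2 assms(4) P show False by simp
  next
    case 3
    with polar have "d1^2*(p1+p2-s*p3) = 0"
      by (simp add: polar_def cubic_grad_def pdot_def power2_eq_square algebra_simps)
    with 3 assms(4) P show False by simp
  qed
qed

lemma line_through_triangle_pt_not_in_curve:
  assumes "r > 0" and "s > 0" and "triangle_pt r s P" and "cross P Q \<noteq> (0,0,0)"
    and pQP: "polar r s Q P = 0" and pPQ: "polar r s P Q = 0"
  shows "cubicF r s Q \<noteq> 0"
proof
  assume FQ: "cubicF r s Q = 0"
  obtain p1 p2 p3 q1 q2 q3 where P: "P = (p1,p2,p3)" and Q: "Q = (q1,q2,q3)"
    by (cases P, cases Q)
  have FP: "cubicF r s P = 0" using assms(3) by (simp add: triangle_pt_def on_curve_def)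
  have "p3 \<noteq> 0" using triangle_pt_coords_nonzero assms(1-3) by (simp add: P)
  \<comment> \<open>If the cubic vanished on the whole line PQ, the point at infinity of that line would lie on
    the curve with its tangent passing through P.\<close>
  define D where "D = padd (pscale (-q3) P) (pscale p3 Q)"
  obtain d1 d2 where D': "D = (d1,d2,0)"
    by (simp add: D_def P Q padd_def pscale_def)
  have "(d1,d2) \<noteq> (0,0)"
    using cross_nonzero_independent[OF assms(4), of "-q3" p3] \<open>p3 \<noteq> 0\<close> by (auto simp: D_def[symmetric] D')
  moreover have "cubicF r s (d1,d2,0) = 0"
    using cubicF_padd_pscale[of r s "-q3" P p3 Q] FP pQP pPQ FQ by (simp add: D_def[symmetric] D')
  moreover have "polar r s D P = 0"
    using polar_padd_pscale[of r s "-q3" P p3 Q] FP pQP pPQ by (simp add: D_def)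
  then have "polar r s (d1,d2,0) (p1,p2,p3) = 0" by (simp add: D' P)
  ultimately show False
    using triangle_pt_off_tangents_at_infinity assms(1-3) by (simp add: P)
qed

lemma cubic_grad_triangle_pt_nonzero:
  assumes "r > 0" and "s > 0" and "s^2 > 27*r^2" and "triangle_pt r s P"
  shows "cubic_grad r s P \<noteq> (0,0,0)"
proof
  assume grad: "cubic_grad r s P = (0,0,0)"
  obtain x y z where P: "P = (x,y,z)" by (cases P)
  from assms(4) have "z \<noteq> 0" and "x/z > 0" and "y/z > 0"
    by (auto simp: P triangle_pt_def)
  define a b where "a = x/z" and "b = y/z"
  with \<open>z \<noteq> 0\<close> have P': "P = (a*z, b*z, z)" by (simp add: P)
  have "z^2*(b*(s - 2*a - b)) = fst (cubic_grad r s P)"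
    and "z^2*(a*(s - a - 2*b)) = fst (snd (cubic_grad r s P))"
    and "z^2*(s*(a*b - 3*r^2)) = snd (snd (cubic_grad r s P))"
    by (simp_all add: P' cubic_grad_def power2_eq_square algebra_simps)
  with grad have "z^2*(b*(s - 2*a - b)) = 0" and "z^2*(a*(s - a - 2*b)) = 0"
      and "z^2*(s*(a*b - 3*r^2)) = 0"
    by simp_all
  with \<open>z \<noteq> 0\<close> have "b*(s - 2*a - b) = 0" and "a*(s - a - 2*b) = 0" and "s*(a*b - 3*r^2) = 0"
    by simp_all
  moreover have "a > 0" and "b > 0"
    using \<open>x/z > 0\<close> \<open>y/z > 0\<close> by (simp_all add: a_def b_def)
  ultimately have "s = 2*a + b" and "s = a + 2*b" and "a*b = 3*r^2"
    using assms(2) by simp_all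
  then have "s^2 = 27*r^2" by (simp add: power2_eq_square)
  with assms(3) show False by simp
qed

lemma third_point_secant:
  assumes "cubicF r s P = 0" and "cubicF r s Q = 0" and "cross P Q \<noteq> (0,0,0)"
    and "(polar r s Q P, polar r s P Q) \<noteq> (0,0)"
  shows "third_point r s P Q (padd (pscale (- polar r s Q P) P) (pscale (polar r s P Q) Q))"
proof -
  have "cubicF r s (padd (pscale a P) (pscale b Q)) =
          (-1) * (0*a - 1*b) * (1*a - 0*b) * (polar r s P Q * a - (- polar r s Q P) * b)" for a b
    using assms(1,2) by (simp add: cubicF_padd_pscale power2_eq_square algebra_simps)
  moreover have "padd (pscale 1 P) (pscale 0 Q) = P" and "padd (pscale 0 P) (pscale 1 Q) = Q"
    by (cases P, cases Q, simp add: padd_def pscale_def)+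
  ultimately show ?thesis
    using assms(3,4)
    by (intro third_pointI[where lam = "-1" and aP = 1 and bP = 0 and aQ = 0 and bQ = 1]) auto
qed

lemma third_point_tangent:
  assumes "cubicF r s P = 0" and "cross P v \<noteq> (0,0,0)" and "polar r s P v = 0"
    and "(polar r s v P, cubicF r s v) \<noteq> (0,0)" and "k \<noteq> 0"
  shows "third_point r s P (pscale k P) (padd (pscale (- cubicF r s v) P) (pscale (polar r s v P) v))"
proof -
  have "cubicF r s (padd (pscale a P) (pscale b v)) =
          (1/k) * (0*a - 1*b) * (0*a - k*b) * (polar r s v P * a - (- cubicF r s v) * b)" for a b
    using assms(1,3,5) by (simp add: cubicF_padd_pscale power2_eq_square power3_eq_cube algebra_simps)
  moreover have "padd (pscale 1 P) (pscale 0 v) = P" and "padd (pscale k P) (pscale 0 v) = pscale k P"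
    by (cases P, cases v, simp add: padd_def pscale_def)+
  ultimately show ?thesis
    using assms(2,4,5)
    by (intro third_pointI[where lam = "1/k" and aP = 1 and bP = 0 and aQ = k and bQ = 0]) auto
qed

lemma cross_cross_left:
  "cross p (cross g p) = padd (pscale (pdot p p) g) (pscale (- pdot g p) p)"
  by (cases p, cases g) (simp add: cross_def padd_def pscale_def pdot_def algebra_simps)

lemma pdot_cross_left: "pdot g (cross g p) = 0"
  by (cases p, cases g) (simp add: cross_def pdot_def algebra_simps)

lemma cross_eq_0_pscale:
  assumes "cross (p1,p2,p3) Q = (0,0,0)" and "p3 \<noteq> 0"
  shows "Q = pscale (snd (snd Q) / p3) (p1,p2,p3)"
  using assms by (cases Q) (auto simp: cross_def pscale_def field_simps)

lemma triangle_pt_tangent_direction: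
  assumes "r > 0" and "s > 0" and "s^2 > 27*r^2" and "triangle_pt r s P"
  obtains v where "cross P v \<noteq> (0,0,0)" and "polar r s P v = 0"
proof -
  \<comment> \<open>v = grad \<times> P is orthogonal to the gradient, which by Euler's identity is orthogonal to P.\<close>
  define g where "g = cubic_grad r s P"
  define v where "v = cross g P"
  have "pdot g P = 0"
    using polar_self[of r s P] assms(4) by (simp add: g_def polar_def triangle_pt_def on_curve_def)
  then have "cross P v = pscale (pdot P P) g"
    by (cases g) (simp add: v_def cross_cross_left padd_def pscale_def)
  moreover have "pdot P P > 0"
  proof -
    obtain p1 p2 p3 where P: "P = (p1,p2,p3)" by (cases P)
    have "p3*p3 > 0"
      using triangle_pt_coords_nonzero(3)[OF assms(1,2)] assms(4) P by (metis not_real_square_gt_zero)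
    then show ?thesis by (simp add: P pdot_def add_nonneg_pos)
  qed
  moreover have "g \<noteq> (0,0,0)"
    using cubic_grad_triangle_pt_nonzero[OF assms] by (simp add: g_def)
  ultimately have "cross P v \<noteq> (0,0,0)"
    by (cases g) (simp add: pscale_def)
  moreover have "polar r s P v = 0"
    by (simp add: polar_def g_def[symmetric] v_def pdot_cross_left)
  ultimately show thesis by (rule that)
qed

lemma third_point_exists:
  assumes "r > 0" and "s > 0" and "s^2 > 27*r^2" and "triangle_pt r s P" and "on_curve r s Q"
  shows "\<exists>R. third_point r s P Q R"
proof -
  have FP: "cubicF r s P = 0" and FQ: "cubicF r s Q = 0"
    using assms(4,5) by (simp_all add: triangle_pt_def on_curve_def)
  show ?thesis
  proof (cases "cross P Q = (0,0,0)")
    case False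
    then show ?thesis
      using third_point_secant[OF FP FQ False] line_through_triangle_pt_not_in_curve[OF assms(1,2,4) False] FQ
      by blast
  next
    case True
    obtain p1 p2 p3 where P: "P = (p1,p2,p3)" by (cases P)
    have "p3 \<noteq> 0" using triangle_pt_coords_nonzero[OF assms(1,2)] assms(4) by (simp add: P)
    define k where "k = snd (snd Q) / p3"
    have Q: "Q = pscale k P"
      using cross_eq_0_pscale True \<open>p3 \<noteq> 0\<close> by (simp add: P k_def)
    have "k \<noteq> 0"
      using assms(5) by (auto simp: Q P on_curve_def pscale_def)
    obtain v where "cross P v \<noteq> (0,0,0)" and "polar r s P v = 0"
      using triangle_pt_tangent_direction[OF assms(1-4)] .
    moreover from this have "(polar r s v P, cubicF r s v) \<noteq> (0,0)"
      using line_through_triangle_pt_not_in_curve[OF assms(1,2,4)] by blast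
    ultimately show ?thesis
      using third_point_tangent[OF FP _ _ _ \<open>k \<noteq> 0\<close>] Q by blast
  qed
qed

lemma third_point_through_infinity:
  assumes "r > 0" and "s > 0" and "triangle_pt r s P" and "w \<noteq> 0"
    and "third_point r s P (w,-w,0) R"
  shows "triangle_pt r s R"
proof -
  obtain p1 p2 p3 x1 x2 x3 where P: "P = (p1,p2,p3)" and R: "R = (x1,x2,x3)"
    by (cases P, cases R)
  note P_coords = triangle_pt_coords_nonzero[OF assms(1,2) assms(3)[unfolded P]]
  have "w*(p3*(x1+x2) - (p1+p2)*x3) = pdot P (cross (w,-w,0) R)"
    by (simp add: P R pdot_def cross_def algebra_simps)
  then have collinear: "p3*(x1+x2) = (p1+p2)*x3"
    using third_point_collinear[OF assms(5)] \<open>w \<noteq> 0\<close> by simp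
  show ?thesis
  proof (cases "x3 = 0")
    case True
    \<comment> \<open>Then R is a multiple of O = (w,-w,0), making the line tangent at O; but that tangent is
      x + y = s z, which misses P.\<close>
    with collinear P_coords have "R = pscale (x1/w) (w,-w,0)"
      using \<open>w \<noteq> 0\<close> by (simp add: R pscale_def eq_neg_iff_add_eq_0)
    with assms(5) have "polar r s (w,-w,0) P = 0"
      by (rule third_point_double_tangent)
    with P_coords \<open>w \<noteq> 0\<close> show ?thesis
      by (simp add: P polar_antidiagonal)
  next
    case False
    have "strip_form s R * p3^2 = (p3*(x1+x2)) * (p3*(x1+x2) - s*x3*p3)"
      by (simp add: R strip_form_def power2_eq_square algebra_simps)
    also have "\<dots> = x3^2 * strip_form s P"
      unfolding collinear by (simp add: P strip_form_def power2_eq_square algebra_simps)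
    finally have "strip_form s R * p3^2 = x3^2 * strip_form s P" .
    moreover have "strip_form s P < 0"
      using triangle_pt_iff_strip_form_neg assms(1-3) by blast
    ultimately have "strip_form s R * p3^2 < 0"
      using False by (simp add: mult_pos_neg)
    then have "strip_form s R < 0"
      using P_coords by (simp add: mult_less_0_iff)
    then show ?thesis
      using triangle_pt_iff_strip_form_neg third_point_on_curve assms(1,2,5) by blast
  qed
qed

lemma third_point_triangle_triangle:
  assumes "r > 0" and "s > 0" and "triangle_pt r s P" and "triangle_pt r s Q"
    and "third_point r s P Q R"
  shows "\<not> triangle_pt r s R"
proof
  assume "triangle_pt r s R"
  with assms have "strip_form s P < 0" and "strip_form s Q < 0" and "strip_form s R < 0"
    using triangle_pt_iff_strip_form_neg by blast+
  then have "strip_form s P * strip_form s Q * strip_form s R < 0"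
    by (meson mult_neg_neg mult_pos_neg)
  with third_point_strip_form[OF assms(5)] show False by simp
qed

lemma third_point_triangle_nontriangle:
  assumes "r > 0" and "s > 0" and "triangle_pt r s P" and "on_curve r s Q"
    and "\<not> triangle_pt r s Q" and "third_point r s P Q R"
  shows "triangle_pt r s R"
proof (rule ccontr)
  assume "\<not> triangle_pt r s R"
  have R: "on_curve r s R" using third_point_on_curve[OF assms(6)] .
  have "strip_form s P < 0" and "strip_form s Q \<ge> 0" and "strip_form s R \<ge> 0"
    using triangle_pt_iff_strip_form_neg assms(1-5) R \<open>\<not> triangle_pt r s R\<close>
    by (auto simp: not_less)
  with third_point_strip_form[OF assms(6)]
  have "strip_form s Q = 0 \<or> strip_form s R = 0"
    by (smt (verit) mult_neg_pos mult_nonneg_nonneg mult.assoc)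
  then show False
  proof
    assume "strip_form s Q = 0"
    then obtain w where "w \<noteq> 0" and "Q = (w,-w,0)"
      using strip_form_zero_on_curve assms(1,2,4) by metis
    then have "triangle_pt r s R"
      using third_point_through_infinity assms(1-3,6) by blast
    with \<open>\<not> triangle_pt r s R\<close> show False ..
  next
    assume "strip_form s R = 0"
    then obtain w where "w \<noteq> 0" and "R = (w,-w,0)"
      using strip_form_zero_on_curve assms(1,2) R by metis
    then have "triangle_pt r s Q"
      using third_point_through_infinity third_point_swap assms(1-3,6) by blast
    with assms(5) show False ..
  qed
qed

lemma triangle_pt_swap_xy: "triangle_pt r s (swap_xy p) \<longleftrightarrow> triangle_pt r s p"
  using cubicF_swap_xy[of r s p]
  by (cases p) (auto simp: triangle_pt_def on_curve_def swap_xy_def)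

lemma on_curve_swap_xy: "on_curve r s (swap_xy p) \<longleftrightarrow> on_curve r s p"
  using cubicF_swap_xy[of r s p]
  by (cases p) (auto simp: on_curve_def swap_xy_def)

lemma cadd_eq_swap_xy_third_point:
  assumes "r > 0" and "s > 0" and "s^2 > 27*r^2" and "triangle_pt r s P" and "on_curve r s Q"
  obtains R where "third_point r s P Q R" and "cadd r s P Q = swap_xy R"
  using someI_ex[OF third_point_exists[OF assms]] that unfolding cadd_def by blast

lemma cadd_triangle_triangle:
  assumes "r > 0" and "s > 0" and "s^2 > 27*r^2" and "triangle_pt r s P" and "triangle_pt r s Q"
  shows "\<not> triangle_pt r s (cadd r s P Q)"
proof -
  have "on_curve r s Q" using assms(5) by (simp add: triangle_pt_def)
  with assms show ?thesis
    by (metis cadd_eq_swap_xy_third_point third_point_triangle_triangle triangle_pt_swap_xy)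
qed

lemma cadd_triangle_nontriangle:
  assumes "r > 0" and "s > 0" and "s^2 > 27*r^2" and "triangle_pt r s P" and "on_curve r s Q"
    and "\<not> triangle_pt r s Q"
  shows "triangle_pt r s (cadd r s P Q)"
  using assms
  by (metis cadd_eq_swap_xy_third_point third_point_triangle_nontriangle triangle_pt_swap_xy)

lemma cadd_triangle_on_curve:
  assumes "r > 0" and "s > 0" and "s^2 > 27*r^2" and "triangle_pt r s P" and "on_curve r s Q"
  shows "on_curve r s (cadd r s P Q)"
  using assms by (metis cadd_eq_swap_xy_third_point third_point_on_curve on_curve_swap_xy)

lemma csum_triangle_pts:
  assumes "r > 0" and "s > 0" and "s^2 > 27*r^2" and "\<forall>P\<in>set Ps. triangle_pt r s P"
  shows "on_curve r s (csum r s Ps) \<and> (triangle_pt r s (csum r s Ps) \<longleftrightarrow> odd (length Ps))"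
  using assms(4)
proof (induction Ps)
  case Nil
  then show ?case
    by (simp add: csum_def czero_def on_curve_def triangle_pt_def cubicF_def)
next
  case (Cons P Ps)
  then have "triangle_pt r s P"
    and IH: "on_curve r s (csum r s Ps) \<and> (triangle_pt r s (csum r s Ps) \<longleftrightarrow> odd (length Ps))"
    by simp_all
  moreover have "csum r s (P # Ps) = cadd r s P (csum r s Ps)"
    by (simp add: csum_def)
  ultimately show ?case
    using cadd_triangle_triangle cadd_triangle_nontriangle cadd_triangle_on_curve assms(1-3)
    by (cases "triangle_pt r s (csum r s Ps)") auto
qed

theorem theorem2:
  fixes r s :: real
  assumes "r > 0" and "s > 3 * sqrt 3 * r"
  shows "(\<forall>P Q. triangle_pt r s P \<and> triangle_pt r s Q \<longrightarrow>
              \<not> triangle_pt r s (cadd r s P Q))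
       \<and> (\<forall>P Q. triangle_pt r s P \<and> on_curve r s Q \<and> \<not> triangle_pt r s Q \<longrightarrow>
              triangle_pt r s (cadd r s P Q))
       \<and> (\<forall>Ps. (\<forall>P\<in>set Ps. triangle_pt r s P) \<longrightarrow>
              (triangle_pt r s (csum r s Ps) \<longleftrightarrow> odd (length Ps)))"
proof -
  have "3 * sqrt 3 * r > 0" using assms(1) by simp
  then have "s > 0" using assms(2) by linarith
  have "27 * r^2 = (3 * sqrt 3 * r)^2" by (simp add: power_mult_distrib)
  also have "\<dots> < s^2" using assms(2) \<open>3 * sqrt 3 * r > 0\<close> by (simp add: power_strict_mono)
  finally have "s^2 > 27 * r^2" .
  with assms(1) \<open>s > 0\<close> show ?thesis
    using cadd_triangle_triangle cadd_triangle_nontriangle csum_triangle_pts by blast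
qed

end
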